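(* Let $B=2\pi/\sqrt{6}$. For all sufficiently large integers $N$ and all integers $\ell$ with $\sqrt{N}(\log N)^2<|\ell|\le N/2$, $$V_d\left(\ell,\,N+\frac{|\ell|(|\ell|+1)}{2}\right)=p(N)\left(1+O\left(N^{-\sqrt{\log N}}\right)\right),$$ with an absolute implied constant.
   Context: A strongly concave composition of a nonnegative integer $n$ is a finite sequence of nonnegative integers $(a_1,\dots,a_s)$, $s\ge 1$, summing to $n$, such that for some index $k$ with $1\le k\le s$ one has $a_1>a_2>\dots>a_{k-1}>a_k<a_{k+1}<\dots<a_s$. Its rank is $s-2k+1$. $V_d(m,n)$ denotes the number of strongly concave compositions of $n$ with rank $m$. $p(n)$ is the partition function, with $p(n)=0$ for negative $n$. *)

theory Defs
  imports Complex_Main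
begin

text \<open>With the paper's 1-indexed position
  k' = k + 1, the rank s - 2k' + 1 equals length xs - 2k - 1. The position is unique.\<close>

definition sc_with_rank :: "nat list \<Rightarrow> int \<Rightarrow> bool" where
  "sc_with_rank xs m \<longleftrightarrow>
     (\<exists>k < length xs. sorted_wrt (>) (take (Suc k) xs) \<and> sorted_wrt (<) (drop k xs)
        \<and> m = int (length xs) - 2 * int k - 1)"

definition strongly_concave :: "nat list \<Rightarrow> bool" where
  "strongly_concave xs \<longleftrightarrow> (\<exists>m. sc_with_rank xs m)"

definition Vd :: "int \<Rightarrow> nat \<Rightarrow> nat" where
  "Vd m n = card {xs. sum_list xs = n \<and> sc_with_rank xs m}"

definition partition_count :: "nat \<Rightarrow> nat" where
  "partition_count n = card {xs. sorted_wrt (\<ge>) xs \<and> (\<forall>x\<in>set xs. 0 < x) \<and> sum_list xs = n}"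

end

theory Submission
  imports Defs "HOL-Library.Multiset" "HOL-Real_Asymp.Real_Asymp"
begin

text \<open>
  Write \<open>n = N + tri l\<close> with \<open>tri l = l (l + 1) / 2\<close>. A strongly concave composition of \<open>n\<close> of
  rank \<open>l\<close> is determined by its prefix up to the smallest entry \<open>c\<close> (at position \<open>k\<close>) and by
  the increasing tail of length \<open>k + l\<close>, which exceeds the minimal tail \<open>c + 1, c + 2, \<dots>\<close> by a
  partition with at most \<open>k + l\<close> parts. The prefix \<open>[0]\<close> thus contributes the partitions of \<open>N\<close>
  into at most \<open>l\<close> parts, which differ from \<open>p(N)\<close> by at most \<open>N p(N - l)\<close>; every other prefix
  contributes at most \<open>p(N - (k + c) l)\<close>.

  All these error terms are controlled by \<open>p(m - l) \<le> \<rho> p(m)\<close> for \<open>m \<le> N\<close>: adding \<open>R\<close> new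
  distinct parts with sum \<open>l\<close> maps partitions of \<open>m - l\<close> to partitions of \<open>m\<close>, each of which has
  at most \<open>\<surd>(2N)\<close> distinct parts and so arises only boundedly often. With \<open>R \<approx> (log N)\<^sup>2 / 8\<close>
  and \<open>l > \<surd>N (log N)\<^sup>2\<close> this gives \<open>\<rho> \<le> 6 \<surd>N 2 ^ (-(log N)\<^sup>2 / 8)\<close>, which beats every
  power of \<open>N\<close> and in particular the polynomially many prefixes, leaving an error
  \<open>O(N ^ (-\<surd>(log N)))\<close>.
\<close>

definition partitions :: "nat \<Rightarrow> nat multiset set" where
  "partitions n = {M. 0 \<notin># M \<and> sum_mset M = n}"

lemma length_le_sum_list_pos: "\<forall>x\<in>set xs. 0 < (x::nat) \<Longrightarrow> length xs \<le> sum_list xs"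
  by (induction xs) auto

lemma bij_betw_mset_partitions:
  "bij_betw mset {xs. sorted_wrt (\<ge>) xs \<and> (\<forall>x\<in>set xs. 0 < x) \<and> sum_list xs = n} (partitions n)"
  (is "bij_betw mset ?L _")
proof (rule bij_betw_imageI)
  show "inj_on mset ?L"
  proof
    fix xs ys assume "xs \<in> ?L" "ys \<in> ?L" "mset xs = mset ys"
    then have "sorted (rev xs)" "sorted (rev ys)" "mset (rev xs) = mset (rev ys)"
      by (auto simp: sorted_wrt_rev)
    then have "rev xs = rev ys"
      by (metis properties_for_sort)
    then show "xs = ys" by simp
  qed
  show "mset ` ?L = partitions n"
  proof
    show "mset ` ?L \<subseteq> partitions n"
      by (auto simp: partitions_def sum_mset_sum_list)
    show "partitions n \<subseteq> mset ` ?L"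
    proof
      fix M assume "M \<in> partitions n"
      then have "rev (sorted_list_of_multiset M) \<in> ?L"
        by (auto simp: partitions_def sorted_wrt_rev sum_mset_sum_list[symmetric] intro!: gr0I)
      then show "M \<in> mset ` ?L"
        by (rule image_eqI[rotated]) simp
    qed
  qed
qed

lemma partition_count_eq_card: "partition_count n = card (partitions n)"
  unfolding partition_count_def using bij_betw_mset_partitions by (rule bij_betw_same_card)

lemma finite_partitions: "finite (partitions n)"
proof -
  have "{xs. sorted_wrt (\<ge>) xs \<and> (\<forall>x\<in>set xs. 0 < x) \<and> sum_list xs = n}
      \<subseteq> {xs. set xs \<subseteq> {0..n} \<and> length xs \<le> n}"
    using length_le_sum_list_pos member_le_sum_list by fastforce
  moreover have "finite {xs. set xs \<subseteq> {0..n} \<and> length xs \<le> n}"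
    by (rule finite_lists_length_le) auto
  ultimately show ?thesis
    using bij_betw_mset_partitions bij_betw_finite finite_subset by blast
qed

lemma partition_count_mono: "m \<le> m' \<Longrightarrow> partition_count m \<le> partition_count m'"
proof (induction m' rule: dec_induct)
  case (step m')
  have "card (partitions m') \<le> card (partitions (Suc m'))"
    by (rule card_inj_on_le[where f = "add_mset 1"])
      (auto simp: partitions_def inj_on_def finite_partitions[unfolded partitions_def])
  with step.IH show ?case by (simp add: partition_count_eq_card)
qed simp

definition msets_size_sum :: "nat \<Rightarrow> nat \<Rightarrow> nat multiset set" where
  "msets_size_sum r s = {M. size M = r \<and> sum_mset M = s}"

lemma finite_msets_size_sum: "finite (msets_size_sum r s)"
proof -
  have "msets_size_sum r s \<subseteq> mset ` {xs. set xs \<subseteq> {0..s} \<and> length xs = r}"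
  proof
    fix M assume M: "M \<in> msets_size_sum r s"
    have "set (sorted_list_of_multiset M) \<subseteq> {0..s}"
      using M by (auto simp: msets_size_sum_def sum_mset.remove)
    moreover have "length (sorted_list_of_multiset M) = r"
      using M size_mset[of "sorted_list_of_multiset M"] by (simp add: msets_size_sum_def)
    ultimately show "M \<in> mset ` {xs. set xs \<subseteq> {0..s} \<and> length xs = r}"
      by (intro image_eqI[where x = "sorted_list_of_multiset M"]) auto
  qed
  moreover have "finite {xs. set xs \<subseteq> {0..s} \<and> length xs = r}"
    by (rule finite_lists_length_eq) auto
  ultimately show ?thesis by (rule finite_subset[OF _ finite_imageI])
qed

lemma size_eq_size_positive_part_plus_count_0:
  "size M = size (filter_mset ((<) 0) M) + count M (0::nat)"
proof -
  have "filter_mset (\<lambda>x. \<not> 0 < x) M = filter_mset (\<lambda>x. x = 0) M"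
    by (rule filter_mset_cong) auto
  then have "filter_mset (\<lambda>x. \<not> 0 < x) M = replicate_mset (count M 0) 0"
    by (simp add: filter_eq_replicate_mset)
  then show ?thesis
    by (metis multiset_partition size_replicate_mset size_union)
qed

lemma mset_eq_by_positive_part:
  fixes M N :: "nat multiset"
  assumes "size M = size N" and "filter_mset ((<) 0) M = filter_mset ((<) 0) N"
  shows "M = N"
proof (rule multiset_eqI)
  fix x
  show "count M x = count N x"
  proof (cases "x = 0")
    case True
    then show ?thesis
      using assms size_eq_size_positive_part_plus_count_0[of M] size_eq_size_positive_part_plus_count_0[of N]
      by simp
  next
    case False
    then show ?thesis using arg_cong[OF assms(2), of "\<lambda>M. count M x"] by simp
  qed
qed

lemma card_msets_size_sum_le: "card (msets_size_sum r s) \<le> partition_count s"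
proof -
  have "card (msets_size_sum r s) \<le> card (partitions s)"
  proof (rule card_inj_on_le[where f = "filter_mset ((<) 0)"])
    show "inj_on (filter_mset ((<) 0)) (msets_size_sum r s)"
      by (auto intro!: inj_onI mset_eq_by_positive_part simp: msets_size_sum_def)
    have "sum_mset (filter_mset ((<) 0) M) = sum_mset M" for M :: "nat multiset"
      by (induction M) auto
    then show "filter_mset ((<) 0) ` msets_size_sum r s \<subseteq> partitions s"
      by (auto simp: msets_size_sum_def partitions_def)
  qed (rule finite_partitions)
  then show ?thesis by (simp add: partition_count_eq_card)
qed

lemma card_times_Suc_card_le_sum:
  "finite S \<Longrightarrow> 0 \<notin> S \<Longrightarrow> card S * (card S + 1) \<le> 2 * \<Sum>(S::nat set)"
proof (induction "card S" arbitrary: S)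
  case (Suc d)
  define m where "m = Max S"
  have m: "m \<in> S" unfolding m_def using Suc.hyps(2) Suc.prems(1) by (intro Max_in) auto
  have "S \<subseteq> {1..m}" using Suc.prems by (auto simp: m_def Suc_le_eq intro: gr0I)
  then have "card S \<le> m" using card_mono[of "{1..m}" S] by simp
  moreover have "card (S - {m}) = d" using Suc.hyps(2) Suc.prems m by simp
  then have "d * (d + 1) \<le> 2 * \<Sum>(S - {m})"
    using Suc.hyps(1)[of "S - {m}"] Suc.prems by simp
  moreover have "\<Sum>S = m + \<Sum>(S - {m})" using Suc m by (simp add: sum.remove)
  ultimately show ?case using Suc.hyps(2)[symmetric] by (simp add: algebra_simps)
qed simp

lemma sum_set_mset_le_sum_mset: "\<Sum>(set_mset M) \<le> sum_mset (M :: nat multiset)"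
proof -
  have "sum_mset (mset_set (set_mset M)) \<le> sum_mset M"
    by (metis mset_set_set_mset_msubset subset_mset.add_diff_inverse sum_mset.union le_add1)
  then show ?thesis by (simp add: sum_unfold_sum_mset)
qed

lemma card_set_mset_partition:
  assumes "M \<in> partitions m"
  shows "card (set_mset M) * (card (set_mset M) + 1) \<le> 2 * m"
  using card_times_Suc_card_le_sum[of "set_mset M"] sum_set_mset_le_sum_mset[of M] assms
  by (auto simp: partitions_def)

text \<open>The sets \<open>insert (t - \<Sum>T) T\<close> with \<open>T \<subseteq> {1..Mv}\<close> of size \<open>R - 1\<close> are distinct, since
  \<open>t - \<Sum>T > Mv\<close>.\<close>

lemma choose_le_card_sets_with_sum:
  fixes t R Mv :: nat
  assumes "1 \<le> R" and "R * Mv + 1 \<le> t"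
  shows "Mv choose (R - 1) \<le> card {S. S \<subseteq> {1..t} \<and> card S = R \<and> \<Sum>S = t}"
proof -
  define TT where "TT = {T. T \<subseteq> {1..Mv} \<and> card T = R - 1}"
  have big: "Mv < t - \<Sum>T" if "T \<in> TT" for T
  proof -
    have "\<Sum>T \<le> card T * Mv"
      using sum_bounded_above[of T id Mv] that by (force simp: TT_def)
    then have "\<Sum>T \<le> (R - 1) * Mv" using that by (simp add: TT_def)
    moreover have "R * Mv = (R - 1) * Mv + Mv" using assms(1) by (cases R) auto
    ultimately show ?thesis using assms(2) by linarith
  qed
  have "Mv choose (R - 1) = card TT" using n_subsets[of "{1..Mv}" "R - 1"] by (simp add: TT_def)
  also have "\<dots> \<le> card {S. S \<subseteq> {1..t} \<and> card S = R \<and> \<Sum>S = t}"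
  proof (rule card_inj_on_le[where f = "\<lambda>T. insert (t - \<Sum>T) T"])
    have "insert (t - \<Sum>T) T \<inter> {1..Mv} = T" if "T \<in> TT" for T
      using that big[OF that] by (auto simp: TT_def)
    then show "inj_on (\<lambda>T. insert (t - \<Sum>T) T) TT"
      by (rule inj_on_inverseI[where g = "\<lambda>S. S \<inter> {1..Mv}"])
    show "(\<lambda>T. insert (t - \<Sum>T) T) ` TT \<subseteq> {S. S \<subseteq> {1..t} \<and> card S = R \<and> \<Sum>S = t}"
    proof
      fix S assume "S \<in> (\<lambda>T. insert (t - \<Sum>T) T) ` TT"
      then obtain T where T: "T \<in> TT" and S: "S = insert (t - \<Sum>T) T" by auto
      then have "finite T" "t - \<Sum>T \<notin> T" "\<Sum>T \<le> t" using big[OF T]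
        by (auto simp: TT_def intro: finite_subset)
      moreover have "1 * Mv \<le> R * Mv" using assms(1) by (rule mult_le_mono1)
      then have "Mv < t" using assms(2) by linarith
      ultimately show "S \<in> {S. S \<subseteq> {1..t} \<and> card S = R \<and> \<Sum>S = t}"
        using T big[OF T] assms(1) by (auto simp: TT_def S)
    qed
  qed (rule finite_subset[of _ "Pow {1..t}"], auto)
  finally show ?thesis .
qed

text \<open>Adding to a partition of \<open>m - t\<close> a set of \<open>R\<close> distinct parts with sum \<open>t\<close> gives a partition
  of \<open>m\<close>, and a partition of \<open>m\<close> with at most \<open>D\<close> distinct parts arises in at most \<open>D choose R\<close>
  ways.\<close>

lemma partition_count_diff_mult_choose_le:
  fixes m t R Mv D :: nat
  assumes "t \<le> m" and "1 \<le> R" and "R * Mv + 1 \<le> t"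
    and D: "\<And>M. M \<in> partitions m \<Longrightarrow> card (set_mset M) \<le> D"
  shows "partition_count (m - t) * (Mv choose (R - 1)) \<le> partition_count m * (D choose R)"
proof -
  define SS where "SS = {S. S \<subseteq> {1..t} \<and> card S = R \<and> \<Sum>S = t}"
  have "partition_count (m - t) * (Mv choose (R - 1)) \<le> card (partitions (m - t) \<times> SS)"
    using choose_le_card_sets_with_sum[OF assms(2,3)]
    by (simp add: card_cartesian_product partition_count_eq_card SS_def)
  also have "\<dots> \<le> card (SIGMA M:partitions m. {S. S \<subseteq> set_mset M \<and> card S = R})"
  proof (rule card_inj_on_le[where f = "\<lambda>(M, S). (M + mset_set S, S)"])
    show "inj_on (\<lambda>(M, S). (M + mset_set S, S)) (partitions (m - t) \<times> SS)"
      by (rule inj_onI) clarsimp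
    show "(\<lambda>(M, S). (M + mset_set S, S)) ` (partitions (m - t) \<times> SS)
        \<subseteq> (SIGMA M:partitions m. {S. S \<subseteq> set_mset M \<and> card S = R})"
    proof
      fix x assume "x \<in> (\<lambda>(M, S). (M + mset_set S, S)) ` (partitions (m - t) \<times> SS)"
      then obtain M S where M: "M \<in> partitions (m - t)" and S: "S \<in> SS"
        and x: "x = (M + mset_set S, S)" by auto
      have "finite S" using S by (auto simp: SS_def intro: finite_subset)
      with M S assms(1) show "x \<in> (SIGMA M:partitions m. {S. S \<subseteq> set_mset M \<and> card S = R})"
        unfolding x by (auto simp: partitions_def SS_def sum_unfold_sum_mset)
    qed
    show "finite (SIGMA M:partitions m. {S. S \<subseteq> set_mset M \<and> card S = R})"
      by (intro finite_SigmaI finite_partitions) auto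
  qed
  also have "\<dots> = (\<Sum>M\<in>partitions m. card (set_mset M) choose R)"
    by (simp add: finite_partitions n_subsets)
  also have "\<dots> \<le> (\<Sum>M\<in>partitions m. D choose R)"
    by (rule sum_mono) (use D binomial_right_mono in auto)
  also have "\<dots> = partition_count m * (D choose R)" by (simp add: partition_count_eq_card)
  finally show ?thesis .
qed

lemma choose_Suc_le: "D choose Suc r \<le> D * (D choose r)"
proof -
  have "Suc r * (D choose Suc r) = D * (D - 1 choose r)" by (rule binomial_absorption)
  also have "\<dots> \<le> D * (D choose r)" by (simp add: binomial_right_mono)
  finally show ?thesis by (metis le_add1 le_trans mult_Suc)
qed

lemma two_power_mult_choose_le: "2 * D \<le> M \<Longrightarrow> 2 ^ k * (D choose k) \<le> M choose k"
proof (induction k)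
  case (Suc k)
  have absorb: "Suc k * (X choose Suc k) = (X - k) * (X choose k)" for X
    using binomial_absorption[of k X] binomial_absorb_comp[of X k] by simp
  have "Suc k * (2 ^ Suc k * (D choose Suc k)) = 2 * 2 ^ k * (Suc k * (D choose Suc k))"
    by (simp only: mult_ac power_Suc)
  also have "\<dots> = 2 * (D - k) * (2 ^ k * (D choose k))" by (simp only: absorb mult_ac)
  also have "\<dots> \<le> (M - k) * (M choose k)"
    using Suc by (intro mult_mono) auto
  also have "\<dots> = Suc k * (M choose Suc k)" by (simp only: absorb)
  finally show ?case by (simp only: mult_le_cancel1)
qed simp

lemma partition_count_diff_le:
  fixes l R Mv D m :: nat
  assumes "1 \<le> R" and "R * Mv + 1 \<le> l" and "2 * D \<le> Mv" and "R - 1 \<le> Mv" and "l \<le> m"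
    and "\<And>M. M \<in> partitions m \<Longrightarrow> card (set_mset M) \<le> D"
  shows "real (partition_count (m - l)) \<le> real D / 2 ^ (R - 1) * real (partition_count m)"
proof -
  obtain r where R: "R = Suc r" using assms(1) by (cases R) auto
  have "partition_count (m - l) * (Mv choose r) * 2 ^ r \<le> partition_count m * ((D choose R) * 2 ^ r)"
    using partition_count_diff_mult_choose_le[of l m R Mv D] assms R by (simp add: mult.assoc)
  also have "\<dots> \<le> partition_count m * (D * (2 ^ r * (D choose r)))"
    using choose_Suc_le[of D r] R by simp
  also have "\<dots> \<le> partition_count m * (D * (Mv choose r))"
    using two_power_mult_choose_le[OF assms(3), of r] by simp
  finally have "(partition_count (m - l) * 2 ^ r) * (Mv choose r) \<le> (partition_count m * D) * (Mv choose r)"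
    by (simp add: algebra_simps)
  moreover have "0 < Mv choose r" using assms(4) R by (simp add: zero_less_binomial)
  ultimately have "partition_count (m - l) * 2 ^ r \<le> partition_count m * D" by simp
  then have "real (partition_count (m - l)) * 2 ^ r \<le> real (partition_count m) * real D"
    by (metis of_nat_le_iff of_nat_mult of_nat_numeral of_nat_power)
  then show ?thesis using R by (simp add: field_simps)
qed

lemma partition_count_diff_mult_le_power:
  fixes l N w :: nat and \<rho> :: real
  assumes step: "\<And>m. l \<le> m \<Longrightarrow> m \<le> N \<Longrightarrow> real (partition_count (m - l)) \<le> \<rho> * real (partition_count m)"
    and "0 \<le> \<rho>" and "w * l \<le> N"
  shows "real (partition_count (N - w * l)) \<le> \<rho> ^ w * real (partition_count N)"
  using assms(3)
proof (induction w)
  case (Suc w)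
  then have "real (partition_count (N - w * l - l)) \<le> \<rho> * real (partition_count (N - w * l))"
    by (intro step) auto
  also have "\<dots> \<le> \<rho> * (\<rho> ^ w * real (partition_count N))"
    using Suc \<open>0 \<le> \<rho>\<close> by (intro mult_left_mono) auto
  finally show ?case by (simp add: algebra_simps diff_diff_add)
qed simp

lemma size_le_sum_mset: "0 \<notin># M \<Longrightarrow> size M \<le> sum_mset (M::nat multiset)"
  by (induction M) (auto simp: Suc_le_eq intro: gr0I)

lemma sum_mset_image_pred:
  "0 \<notin># M \<Longrightarrow> sum_mset (image_mset (\<lambda>x. x - 1) M) + size M = sum_mset (M::nat multiset)"
  by (induction M) auto

text \<open>Lowering every part of a partition of \<open>N\<close> with \<open>r > l\<close> parts by one gives a multiset of size \<open>r\<close>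
  and sum \<open>N - r\<close>.\<close>

lemma card_partitions_many_parts_le:
  "card {M \<in> partitions N. l < size M} \<le> N * partition_count (N - l)"
proof -
  let ?f = "\<lambda>M. (size M, image_mset (\<lambda>x. x - 1) M)"
  have "card {M \<in> partitions N. l < size M} \<le> card (SIGMA r:{l+1..N}. msets_size_sum r (N - r))"
  proof (rule card_inj_on_le[where f = ?f])
    have "image_mset Suc (image_mset (\<lambda>x. x - 1) M) = M" if "0 \<notin># M" for M :: "nat multiset"
      using that by (induction M) auto
    then show "inj_on ?f {M \<in> partitions N. l < size M}"
      by (intro inj_onI) (metis (no_types, lifting) mem_Collect_eq partitions_def prod.inject)
    show "?f ` {M \<in> partitions N. l < size M} \<subseteq> (SIGMA r:{l+1..N}. msets_size_sum r (N - r))"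
      using size_le_sum_mset sum_mset_image_pred
      by (fastforce simp: partitions_def msets_size_sum_def)
    show "finite (SIGMA r:{l+1..N}. msets_size_sum r (N - r))"
      by (simp add: finite_msets_size_sum)
  qed
  also have "\<dots> = (\<Sum>r\<in>{l+1..N}. card (msets_size_sum r (N - r)))"
    by (simp add: finite_msets_size_sum)
  also have "\<dots> \<le> (\<Sum>r\<in>{l+1..N}. partition_count (N - l))"
    by (intro sum_mono order.trans[OF card_msets_size_sum_le] partition_count_mono) auto
  also have "\<dots> \<le> N * partition_count (N - l)" by simp
  finally show ?thesis .
qed

definition tri :: "nat \<Rightarrow> nat" where
  "tri L = (\<Sum>i<L. Suc i)"

lemma le_tri: "L \<le> tri L"
  unfolding tri_def by (induction L) auto

lemma tri_add_mult_le: "tri l + k * l \<le> tri (k + l)"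
  unfolding tri_def by (induction k) auto

lemma tri_le_square: "tri L \<le> L * L"
  unfolding tri_def by (induction L) auto

lemma tri_eq: "tri L = L * (L + 1) div 2"
proof -
  have "2 * tri L = L * (L + 1)" unfolding tri_def by (induction L) auto
  then show ?thesis by simp
qed

lemma sorted_wrt_less_nth_add_le:
  fixes zs :: "nat list"
  assumes "sorted_wrt (<) zs" "a \<le> b" "b < length zs"
  shows "zs ! a + (b - a) \<le> zs ! b"
  using assms(2,3)
proof (induction b)
  case (Suc b)
  show ?case
  proof (cases "a = Suc b")
    case False
    then have "zs ! a + (b - a) \<le> zs ! b" using Suc by simp
    moreover have "zs ! b < zs ! Suc b"
      using assms(1) Suc.prems by (simp add: sorted_wrt_iff_nth_less)
    ultimately show ?thesis using False Suc.prems by linarith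
  qed simp
qed simp

text \<open>Beyond a position \<open>k\<close> from which \<open>xs\<close> increases strictly, the \<open>i\<close>-th entry exceeds
  \<open>xs ! k + i + 1\<close> by a weakly increasing amount, the tail excess.\<close>

definition tail_excess :: "nat list \<Rightarrow> nat \<Rightarrow> nat list" where
  "tail_excess xs k = map (\<lambda>i. xs ! (Suc k + i) - i - 1 - xs ! k) [0..<length xs - Suc k]"

definition attach_tail :: "nat list \<Rightarrow> nat list \<Rightarrow> nat list" where
  "attach_tail pre ys = pre @ map (\<lambda>i. ys ! i + i + 1 + last pre) [0..<length ys]"

lemma nth_add_le_nth_of_increasing_drop:
  assumes "sorted_wrt (<) (drop k xs)" "a \<le> b" "k + b < length xs"
  shows "xs ! (k + a) + (b - a) \<le> xs ! (k + b)"
  using sorted_wrt_less_nth_add_le[OF assms(1,2)] assms(2,3) by simp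

lemma nth_tail_excess:
  assumes "sorted_wrt (<) (drop k xs)" "i < length xs - Suc k"
  shows "tail_excess xs k ! i + i + 1 + xs ! k = xs ! (Suc k + i)"
proof -
  have "xs ! (k + 0) + (Suc i - 0) \<le> xs ! (k + Suc i)"
    by (rule nth_add_le_nth_of_increasing_drop[OF assms(1)]) (use assms(2) in linarith)+
  with assms(2) show ?thesis by (simp add: tail_excess_def)
qed

lemma sorted_tail_excess:
  assumes "sorted_wrt (<) (drop k xs)"
  shows "sorted (tail_excess xs k)"
  unfolding sorted_iff_nth_mono
proof (intro allI impI)
  fix i j assume ij: "i \<le> j" "j < length (tail_excess xs k)"
  then have j: "j < length xs - Suc k" by (simp add: tail_excess_def)
  have "xs ! (k + Suc i) + (Suc j - Suc i) \<le> xs ! (k + Suc j)"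
    by (rule nth_add_le_nth_of_increasing_drop[OF assms]) (use ij j in linarith)+
  moreover have "tail_excess xs k ! i + i + 1 + xs ! k = xs ! (Suc k + i)"
    by (rule nth_tail_excess[OF assms]) (use ij j in linarith)
  moreover have "tail_excess xs k ! j + j + 1 + xs ! k = xs ! (Suc k + j)"
    by (rule nth_tail_excess[OF assms j])
  ultimately show "tail_excess xs k ! i \<le> tail_excess xs k ! j"
    using ij by simp
qed

lemma attach_tail_tail_excess:
  assumes "k < length xs" "sorted_wrt (<) (drop k xs)"
  shows "attach_tail (take (Suc k) xs) (tail_excess xs k) = xs"
proof -
  have "last (take (Suc k) xs) = xs ! k"
    using assms(1) by (simp add: last_conv_nth take_Suc_conv_app_nth)
  moreover have "map (\<lambda>i. tail_excess xs k ! i + i + 1 + xs ! k) [0..<length xs - Suc k] = drop (Suc k) xs"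
    by (rule nth_equalityI) (use nth_tail_excess[OF assms(2)] in auto)
  ultimately show ?thesis
    by (simp add: attach_tail_def tail_excess_def)
qed

lemma sum_list_attach_tail:
  "sum_list (attach_tail pre ys) = sum_list pre + sum_list ys + tri (length ys) + length ys * last pre"
proof -
  have "sum_list (map (\<lambda>i. ys ! i + i + 1 + last pre) [0..<length ys])
      = (\<Sum>i<length ys. ys ! i + Suc i + last pre)"
    by (simp add: interv_sum_list_conv_sum_set_nat atLeast0LessThan)
  also have "\<dots> = (\<Sum>i<length ys. ys ! i) + tri (length ys) + length ys * last pre"
    unfolding tri_def by (simp only: sum.distrib) simp
  also have "(\<Sum>i<length ys. ys ! i) = sum_list ys"
    by (simp add: sum_list_sum_nth atLeast0LessThan)
  finally show ?thesis
    unfolding attach_tail_def sum_list_append by simp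
qed

lemma tail_excess_attach_tail:
  assumes "pre \<noteq> []"
  shows "tail_excess (attach_tail pre ys) (length pre - 1) = ys"
proof (rule nth_equalityI)
  show "length (tail_excess (attach_tail pre ys) (length pre - 1)) = length ys"
    using assms by (simp add: tail_excess_def attach_tail_def)
  fix i assume "i < length (tail_excess (attach_tail pre ys) (length pre - 1))"
  then have "i < length ys" using assms by (simp add: tail_excess_def attach_tail_def)
  with assms show "tail_excess (attach_tail pre ys) (length pre - 1) ! i = ys ! i"
    by (simp add: tail_excess_def attach_tail_def nth_append last_conv_nth)
qed

lemma sc_with_rank_attach_tail_singleton:
  assumes "sorted ys"
  shows "sc_with_rank (attach_tail [c] ys) (int (length ys))"
proof -
  have "sorted_wrt (\<lambda>i j. ys ! i + i + 1 + c < ys ! j + j + 1 + c) [0..<length ys]"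
  proof (rule sorted_wrt_mono_rel[OF _ sorted_wrt_upt])
    fix i j assume "i \<in> set [0..<length ys]" "j \<in> set [0..<length ys]" "i < j"
    then have "ys ! i \<le> ys ! j" using assms by (simp add: sorted_iff_nth_mono)
    with \<open>i < j\<close> show "ys ! i + i + 1 + c < ys ! j + j + 1 + c" by simp
  qed
  then have "sorted_wrt (<) (attach_tail [c] ys)"
    by (simp add: attach_tail_def sorted_wrt_map)
  then show ?thesis
    unfolding sc_with_rank_def by (intro exI[of _ 0]) (simp add: attach_tail_def)
qed

text \<open>The position of the smallest entry of a strongly concave composition; it is unique, but only
  its existence is used.\<close>

definition sc_center :: "int \<Rightarrow> nat list \<Rightarrow> nat" where
  "sc_center m xs = (SOME k. k < length xs \<and> sorted_wrt (>) (take (Suc k) xs)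
     \<and> sorted_wrt (<) (drop k xs) \<and> m = int (length xs) - 2 * int k - 1)"

lemma sc_center:
  assumes "sc_with_rank xs m"
  shows "sc_center m xs < length xs" and "sorted_wrt (<) (drop (sc_center m xs) xs)"
    and "m = int (length xs) - 2 * int (sc_center m xs) - 1"
  using someI_ex[OF assms[unfolded sc_with_rank_def]] unfolding sc_center_def by blast+

definition center_split :: "int \<Rightarrow> nat list \<Rightarrow> nat list \<times> nat multiset" where
  "center_split m xs = (take (Suc (sc_center m xs)) xs, mset (tail_excess xs (sc_center m xs)))"

lemma inj_on_center_split: "inj_on (center_split m) {xs. sc_with_rank xs m}"
proof
  fix xs ys assume "xs \<in> {xs. sc_with_rank xs m}" "ys \<in> {xs. sc_with_rank xs m}"
    and eq: "center_split m xs = center_split m ys"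
  then have xs: "sc_with_rank xs m" and ys: "sc_with_rank ys m" by simp_all
  define k k' where "k = sc_center m xs" and "k' = sc_center m ys"
  have "mset (tail_excess xs k) = mset (tail_excess ys k')"
    using eq by (simp add: center_split_def k_def k'_def)
  then have "tail_excess xs k = sort (tail_excess ys k')"
    using properties_for_sort sorted_tail_excess[OF sc_center(2)[OF xs]] by (metis k_def)
  also have "\<dots> = tail_excess ys k'"
    using sorted_tail_excess[OF sc_center(2)[OF ys]] by (simp add: k'_def sorted_sort_id)
  finally show "xs = ys"
    using eq attach_tail_tail_excess[OF sc_center(1,2)[OF xs]] attach_tail_tail_excess[OF sc_center(1,2)[OF ys]]
    by (metis center_split_def k_def k'_def prod.inject)
qed

text \<open>A composition of \<open>N + tri l\<close> of rank \<open>l\<close> with centre entry \<open>c\<close> at position \<open>k\<close> splits into the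
  prefix \<open>pre\<close> of length \<open>k + 1\<close> and a tail of length \<open>k + l\<close>, whose excess is a multiset of size
  \<open>k + l\<close> and sum \<open>tail_size l N pre\<close>. Since \<open>tri (k + l) \<ge> tri l + k l\<close>, the prefix satisfies
  \<open>l (k + c) \<le> N\<close>.\<close>

definition center_prefixes :: "nat \<Rightarrow> nat \<Rightarrow> nat list set" where
  "center_prefixes l N = {pre. pre \<noteq> [] \<and> length pre \<le> Suc (N + tri l) \<and> set pre \<subseteq> {0..N + tri l}
     \<and> l * (length pre - 1 + last pre) \<le> N}"

definition tail_size :: "nat \<Rightarrow> nat \<Rightarrow> nat list \<Rightarrow> nat" where
  "tail_size l N pre =
     N + tri l - sum_list pre - tri (length pre - 1 + l) - (length pre - 1 + l) * last pre"

lemma finite_center_prefixes: "finite (center_prefixes l N)"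
proof (rule finite_subset)
  show "center_prefixes l N \<subseteq> {pre. set pre \<subseteq> {0..N + tri l} \<and> length pre \<le> Suc (N + tri l)}"
    by (auto simp: center_prefixes_def)
qed (rule finite_lists_length_le, simp)

lemma center_split_mem:
  assumes "sum_list xs = N + tri l" and "sc_with_rank xs (int l)"
  shows "center_split (int l) xs
    \<in> (SIGMA pre:center_prefixes l N. msets_size_sum (length pre - 1 + l) (tail_size l N pre))"
proof -
  define k where "k = sc_center (int l) xs"
  define pre ys where "pre = take (Suc k) xs" and "ys = tail_excess xs k"
  have k: "k < length xs" and inc: "sorted_wrt (<) (drop k xs)" and "int l = int (length xs) - 2 * int k - 1"
    using sc_center[OF assms(2)] by (simp_all add: k_def)
  then have lp: "length pre = Suc k" and ly: "length ys = k + l"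
    by (simp_all add: pre_def ys_def tail_excess_def)
  have "pre \<noteq> []" using lp by auto
  have sum: "N + tri l = sum_list pre + sum_list ys + tri (k + l) + (k + l) * last pre"
    using assms(1) sum_list_attach_tail[of pre ys] attach_tail_tail_excess[OF k inc] ly
    by (simp add: pre_def ys_def)
  have "k \<le> N + tri l" using le_tri[of "k + l"] sum by linarith
  moreover have "set pre \<subseteq> {0..N + tri l}"
    using assms(1) member_le_sum_list[of _ xs] by (auto simp: pre_def dest: in_set_takeD)
  moreover have "l * (k + last pre) \<le> N"
    using sum tri_add_mult_le[of l k] mult_le_mono1[of l "k + l" "last pre"]
    by (simp add: algebra_simps)
  ultimately have "pre \<in> center_prefixes l N"
    using \<open>pre \<noteq> []\<close> lp by (simp add: center_prefixes_def)
  moreover have "mset ys \<in> msets_size_sum (length pre - 1 + l) (tail_size l N pre)"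
    using sum lp ly by (simp add: msets_size_sum_def tail_size_def sum_mset_sum_list)
  ultimately show ?thesis by (simp add: center_split_def pre_def ys_def k_def)
qed

lemma finite_sc_with_rank_sum:
  "finite {xs. sum_list xs = N + tri l \<and> sc_with_rank xs (int l)}"
proof (rule finite_imageD)
  show "finite (center_split (int l) ` {xs. sum_list xs = N + tri l \<and> sc_with_rank xs (int l)})"
  proof (rule finite_subset)
    show "center_split (int l) ` {xs. sum_list xs = N + tri l \<and> sc_with_rank xs (int l)}
        \<subseteq> (SIGMA pre:center_prefixes l N. msets_size_sum (length pre - 1 + l) (tail_size l N pre))"
      using center_split_mem by blast
  qed (simp add: finite_center_prefixes finite_msets_size_sum)
  show "inj_on (center_split (int l)) {xs. sum_list xs = N + tri l \<and> sc_with_rank xs (int l)}"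
    using inj_on_center_split by (rule inj_on_subset) blast
qed

lemma Vd_le_sum_center_prefixes:
  "Vd (int l) (N + tri l) \<le> (\<Sum>pre\<in>center_prefixes l N. partition_count (tail_size l N pre))"
proof -
  let ?T = "SIGMA pre:center_prefixes l N. msets_size_sum (length pre - 1 + l) (tail_size l N pre)"
  have "Vd (int l) (N + tri l) \<le> card ?T"
    unfolding Vd_def
  proof (rule card_inj_on_le)
    show "inj_on (center_split (int l)) {xs. sum_list xs = N + tri l \<and> sc_with_rank xs (int l)}"
      using inj_on_center_split by (rule inj_on_subset) blast
    show "center_split (int l) ` {xs. sum_list xs = N + tri l \<and> sc_with_rank xs (int l)} \<subseteq> ?T"
      using center_split_mem by blast
  qed (simp add: finite_center_prefixes finite_msets_size_sum)
  also have "\<dots> = (\<Sum>pre\<in>center_prefixes l N. card (msets_size_sum (length pre - 1 + l) (tail_size l N pre)))"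
    by (simp add: finite_center_prefixes finite_msets_size_sum)
  also have "\<dots> \<le> (\<Sum>pre\<in>center_prefixes l N. partition_count (tail_size l N pre))"
    by (intro sum_mono card_msets_size_sum_le)
  finally show ?thesis .
qed

text \<open>A partition of \<open>N\<close> into at most \<open>l\<close> parts, padded with zeros to a sorted list \<open>ys\<close> of length
  \<open>l\<close>, gives the strictly increasing composition \<open>attach_tail [0] ys\<close> of \<open>N + tri l\<close> of rank \<open>l\<close>.\<close>

lemma card_partitions_few_parts_le_Vd:
  "card {M \<in> partitions N. size M \<le> l} \<le> Vd (int l) (N + tri l)"
proof -
  define ys :: "nat multiset \<Rightarrow> nat list"
    where "ys M = replicate (l - size M) 0 @ sorted_list_of_multiset M" for M
  have mset_ys: "mset (ys M) = replicate_mset (l - size M) 0 + M" for M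
    by (simp add: ys_def)
  have sorted_ys: "sorted (ys M)" for M
    by (simp add: ys_def sorted_append)
  have ys: "length (ys M) = l" "sum_list (ys M) = N" if "M \<in> partitions N" "size M \<le> l" for M
  proof -
    have "length (ys M) = size (mset (ys M))" by simp
    then show "length (ys M) = l" using that(2) by (simp add: mset_ys)
    have "sum_list (ys M) = sum_mset (mset (ys M))" by (simp add: sum_mset_sum_list)
    then show "sum_list (ys M) = N" using that(1) by (simp add: mset_ys partitions_def)
  qed
  have "card {M \<in> partitions N. size M \<le> l}
      \<le> card {xs. sum_list xs = N + tri l \<and> sc_with_rank xs (int l)}"
  proof (rule card_inj_on_le[where f = "\<lambda>M. attach_tail [0] (ys M)"])
    have "filter_mset ((<) 0) (replicate_mset n (0::nat) + M) = filter_mset ((<) 0) M" for n M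
      by simp
    moreover have "filter_mset ((<) 0) M = M" if "M \<in> partitions N" for M
      using that by (intro multiset_eqI) (auto simp: partitions_def count_eq_zero_iff)
    moreover have "tail_excess (attach_tail [0] (ys M)) 0 = ys M" for M
      using tail_excess_attach_tail[of "[0]" "ys M"] by simp
    ultimately have "filter_mset ((<) 0) (mset (tail_excess (attach_tail [0] (ys M)) 0)) = M"
      if "M \<in> partitions N" for M
      using that by (simp only: mset_ys)
    then show "inj_on (\<lambda>M. attach_tail [0] (ys M)) {M \<in> partitions N. size M \<le> l}"
      by (intro inj_on_inverseI[where g = "\<lambda>xs. filter_mset ((<) 0) (mset (tail_excess xs 0))"]) auto
    show "(\<lambda>M. attach_tail [0] (ys M)) ` {M \<in> partitions N. size M \<le> l}
        \<subseteq> {xs. sum_list xs = N + tri l \<and> sc_with_rank xs (int l)}"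
    proof
      fix xs assume "xs \<in> (\<lambda>M. attach_tail [0] (ys M)) ` {M \<in> partitions N. size M \<le> l}"
      then obtain M where M: "M \<in> partitions N" "size M \<le> l" and xs: "xs = attach_tail [0] (ys M)"
        by auto
      have "sc_with_rank xs (int l)"
        using sc_with_rank_attach_tail_singleton[OF sorted_ys[of M], of 0] ys(1)[OF M] by (simp add: xs)
      then show "xs \<in> {xs. sum_list xs = N + tri l \<and> sc_with_rank xs (int l)}"
        using ys[OF M] by (simp add: xs sum_list_attach_tail)
    qed
  qed (rule finite_sc_with_rank_sum)
  then show ?thesis by (simp add: Vd_def)
qed

lemma partition_count_tail_size_le:
  fixes \<rho> :: real
  assumes step: "\<And>m. l \<le> m \<Longrightarrow> m \<le> N \<Longrightarrow> real (partition_count (m - l)) \<le> \<rho> * real (partition_count m)"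
    and "0 \<le> \<rho>" and "\<rho> \<le> 1" and pre: "pre \<in> center_prefixes l N - {[0]}"
  shows "real (partition_count (tail_size l N pre)) \<le> \<rho> ^ max (length pre - 1) 1 * real (partition_count N)"
proof -
  define k c where "k = length pre - 1" and "c = last pre"
  have "pre \<noteq> []" and lkc: "l * (k + c) \<le> N"
    using pre by (auto simp: center_prefixes_def k_def c_def)
  have "tail_size l N pre \<le> N - (k + c) * l"
    using tri_add_mult_le[of l k] mult_le_mono1[of l "k + l" c]
    by (simp add: tail_size_def k_def c_def algebra_simps)
  then have "real (partition_count (tail_size l N pre)) \<le> real (partition_count (N - (k + c) * l))"
    by (simp add: partition_count_mono)
  also have "\<dots> \<le> \<rho> ^ (k + c) * real (partition_count N)"
    using lkc by (intro partition_count_diff_mult_le_power[OF step \<open>0 \<le> \<rho>\<close>]) (simp_all add: mult.commute)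
  also have "\<dots> \<le> \<rho> ^ max k 1 * real (partition_count N)"
  proof (intro mult_right_mono power_decreasing)
    show "max k 1 \<le> k + c"
    proof (cases "k = 0")
      case True
      with \<open>pre \<noteq> []\<close> have "pre = [c]" by (cases pre) (auto simp: k_def c_def)
      with pre True show ?thesis by (cases c) auto
    qed simp
  qed (use assms(2,3) in auto)
  finally show ?thesis by (simp add: k_def)
qed

text \<open>Lists of length \<open>j\<close> over \<open>{0..n}\<close> number \<open>(n + 1)^j\<close>, and with \<open>q = (n + 1) \<rho> \<le> 1\<close> each
  length contributes at most \<open>(n + 1) q\<close>.\<close>

lemma sum_power_length_lists_le:
  fixes n :: nat and \<rho> :: real
  assumes "0 \<le> \<rho>" and "(real n + 1) * \<rho> \<le> 1"
  shows "(\<Sum>pre\<in>{pre. set pre \<subseteq> {0..n} \<and> length pre \<in> {1..Suc n}}. \<rho> ^ max (length pre - 1) 1)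
     \<le> (real n + 1) ^ 3 * \<rho>"
proof -
  define q where "q = (real n + 1) * \<rho>"
  have q: "0 \<le> q" "q \<le> 1" using assms by (simp_all add: q_def)
  have per_length: "(real n + 1) ^ j * \<rho> ^ max (j - 1) 1 \<le> (real n + 1) * q" if "1 \<le> j" for j
  proof (cases "j = 1")
    case False
    define i where "i = j - 2"
    have j: "j = Suc (Suc i)" using that False unfolding i_def by linarith
    have "(real n + 1) ^ j * \<rho> ^ max (j - 1) 1 = (real n + 1) * q ^ Suc i"
      by (simp add: j q_def power_mult_distrib)
    also have "\<dots> \<le> (real n + 1) * q"
      using q power_decreasing[of 1 "Suc i" q] by (intro mult_left_mono) auto
    finally show ?thesis .
  qed (use assms(1) in \<open>auto simp: q_def mult_le_cancel_right1 mult_less_0_iff\<close>)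
  have "(\<Sum>pre\<in>{pre. set pre \<subseteq> {0..n} \<and> length pre \<in> {1..Suc n}}. \<rho> ^ max (length pre - 1) 1)
      = (\<Sum>j\<in>{1..Suc n}. \<Sum>pre\<in>{pre. set pre \<subseteq> {0..n} \<and> length pre = j}. \<rho> ^ max (length pre - 1) 1)"
    by (subst sum.UNION_disjoint[symmetric]) (auto intro!: sum.cong finite_lists_length_eq)
  also have "\<dots> = (\<Sum>j\<in>{1..Suc n}. (real n + 1) ^ j * \<rho> ^ max (j - 1) 1)"
    by (intro sum.cong refl) (simp add: card_lists_length_eq add.commute)
  also have "\<dots> \<le> (\<Sum>j\<in>{1..Suc n}. (real n + 1) * q)"
    by (intro sum_mono per_length) simp
  also have "\<dots> = (real n + 1) ^ 3 * \<rho>" by (simp add: q_def power3_eq_cube)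
  finally show ?thesis .
qed

lemma Vd_le_partition_count_add:
  fixes \<rho> :: real
  assumes step: "\<And>m. l \<le> m \<Longrightarrow> m \<le> N \<Longrightarrow> real (partition_count (m - l)) \<le> \<rho> * real (partition_count m)"
    and "0 \<le> \<rho>" and small: "(real (N + tri l) + 1) * \<rho> \<le> 1"
  shows "real (Vd (int l) (N + tri l))
    \<le> real (partition_count N) + (real (N + tri l) + 1) ^ 3 * \<rho> * real (partition_count N)"
proof -
  let ?P = "center_prefixes l N" and ?n = "N + tri l"
  let ?A = "{pre. set pre \<subseteq> {0..?n} \<and> length pre \<in> {1..Suc ?n}}"
  have "\<rho> \<le> 1" using small \<open>0 \<le> \<rho>\<close> by (smt (verit) mult_le_cancel_right1 of_nat_0_le_iff)
  have "[0] \<in> ?P" by (simp add: center_prefixes_def)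
  have "?P - {[0]} \<subseteq> ?A" by (auto simp: center_prefixes_def Suc_le_eq intro: gr0I)
  have "finite ?A" by (rule finite_subset[of _ "{pre. set pre \<subseteq> {0..?n} \<and> length pre \<le> Suc ?n}"])
    (auto intro: finite_lists_length_le)
  have "real (Vd (int l) ?n) \<le> (\<Sum>pre\<in>?P. real (partition_count (tail_size l N pre)))"
    using Vd_le_sum_center_prefixes by (simp flip: of_nat_sum)
  also have "\<dots> = real (partition_count N) + (\<Sum>pre\<in>?P - {[0]}. real (partition_count (tail_size l N pre)))"
    using \<open>[0] \<in> ?P\<close> by (simp add: sum.remove finite_center_prefixes tail_size_def)
  also have "\<dots> \<le> real (partition_count N) + (\<Sum>pre\<in>?A. \<rho> ^ max (length pre - 1) 1 * real (partition_count N))"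
    using partition_count_tail_size_le[OF step \<open>0 \<le> \<rho>\<close> \<open>\<rho> \<le> 1\<close>] \<open>?P - {[0]} \<subseteq> ?A\<close> \<open>finite ?A\<close> \<open>0 \<le> \<rho>\<close>
    by (intro add_left_mono order.trans[OF sum_mono sum_mono2]) auto
  also have "\<dots> \<le> real (partition_count N) + (real ?n + 1) ^ 3 * \<rho> * real (partition_count N)"
    using sum_power_length_lists_le[OF \<open>0 \<le> \<rho>\<close>, of ?n] small
    by (simp add: sum_distrib_right[symmetric] mult_right_mono)
  finally show ?thesis .
qed

lemma partition_count_le_Vd_add:
  fixes \<rho> :: real
  assumes "l \<le> N"
    and step: "\<And>m. l \<le> m \<Longrightarrow> m \<le> N \<Longrightarrow> real (partition_count (m - l)) \<le> \<rho> * real (partition_count m)"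
  shows "real (partition_count N) \<le> real (Vd (int l) (N + tri l)) + real N * \<rho> * real (partition_count N)"
proof -
  have "partition_count N = card {M \<in> partitions N. size M \<le> l} + card {M \<in> partitions N. l < size M}"
    by (subst card_Un_disjoint[symmetric]) (auto simp: partition_count_eq_card finite_partitions intro: arg_cong[where f = card])
  then have "real (partition_count N) \<le> real (Vd (int l) (N + tri l)) + real N * real (partition_count (N - l))"
    using card_partitions_few_parts_le_Vd[of N l] card_partitions_many_parts_le[of N l]
    by (simp flip: of_nat_mult)
  also have "\<dots> \<le> real (Vd (int l) (N + tri l)) + real N * (\<rho> * real (partition_count N))"
    using step[OF \<open>l \<le> N\<close> order.refl] by (intro add_left_mono mult_left_mono) auto
  finally show ?thesis by (simp add: mult.assoc)
qed

lemma card_set_mset_partition_le_sqrt: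
  assumes "M \<in> partitions m"
  shows "real (card (set_mset M)) \<le> sqrt (2 * real m)"
proof (rule real_le_rsqrt)
  have "card (set_mset M) * card (set_mset M) \<le> 2 * m"
    using card_set_mset_partition[OF assms] by (meson le_add1 le_trans mult_le_mono2)
  then show "(real (card (set_mset M)))\<^sup>2 \<le> 2 * real m"
    unfolding power2_eq_square by (metis of_nat_le_iff of_nat_mult of_nat_numeral)
qed

lemma divide_two_power_floor_le:
  fixes a y :: real
  assumes "0 \<le> a" and "0 \<le> y"
  shows "a / 2 ^ (nat \<lfloor>y\<rfloor> - 1) \<le> 4 * a * 2 powr (- y)"
proof -
  have "y - 2 \<le> real (nat \<lfloor>y\<rfloor> - 1)" using assms(2) by linarith
  then have "2 powr (y - 2) \<le> 2 powr real (nat \<lfloor>y\<rfloor> - 1)" by (rule powr_mono) simp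
  then have "2 powr y / 4 \<le> 2 ^ (nat \<lfloor>y\<rfloor> - 1)" by (simp add: powr_diff powr_realpow)
  then have "a / 2 ^ (nat \<lfloor>y\<rfloor> - 1) \<le> a / (2 powr y / 4)"
    using assms(1) by (intro divide_left_mono) simp_all
  then show ?thesis by (simp add: powr_minus field_simps)
qed

lemma of_nat_less_mult_div_add_one:
  fixes a R :: nat
  assumes "0 < R"
  shows "real a < real R * (real (a div R) + 1)"
proof -
  have "a < R * (a div R) + R"
    using mult_div_mod_eq[of R a] mod_less_divisor[OF assms, of a] by linarith
  then have "a < R * Suc (a div R)" by simp
  then have "real a < real (R * Suc (a div R))" by (simp only: of_nat_less_iff)
  then show ?thesis by (simp add: algebra_simps)
qed

text \<open>With \<open>y = (ln x)\<^sup>2 / 8\<close>, take \<open>R = \<lfloor>y\<rfloor>\<close> new distinct parts, each of the first \<open>R - 1\<close> at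
  most \<open>Mv = (L - 1) div R > 8\<surd>x - 2\<close>; a partition of \<open>m \<le> N\<close> has at most \<open>D = \<lfloor>\<surd>(2x)\<rfloor>\<close>
  distinct parts.\<close>

lemma partition_count_diff_le_explicit:
  fixes N L m :: nat
  defines "x \<equiv> real N"
  assumes y2: "2 \<le> (ln x)\<^sup>2 / 8" and y_small: "(ln x)\<^sup>2 / 8 + 2 < 8 * sqrt x"
    and L: "sqrt x * (ln x)\<^sup>2 < real L" and "L \<le> m" and "m \<le> N"
  shows "real (partition_count (m - L)) \<le> 6 * sqrt x * 2 powr (- ((ln x)\<^sup>2 / 8)) * real (partition_count m)"
proof -
  define y R D Mv where "y = (ln x)\<^sup>2 / 8" and "R = nat \<lfloor>y\<rfloor>"
    and "D = nat \<lfloor>sqrt (2 * x)\<rfloor>" and "Mv = (L - 1) div R"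
  have "N \<noteq> 0" using y2 by (cases N) (auto simp: x_def)
  then have "1 \<le> sqrt x" by (simp add: x_def)
  have "2 \<le> R" using y2 by (simp add: R_def y_def le_nat_iff le_floor_iff)
  have "0 \<le> y" by (simp add: y_def)
  then have "real R \<le> y" by (simp add: R_def)
  have "0 \<le> sqrt x * (ln x)\<^sup>2" by (simp add: x_def)
  then have "1 \<le> L" using L by linarith
  have D: "real D \<le> 3 / 2 * sqrt x"
  proof -
    have "sqrt 2 \<le> 3 / 2" by (rule real_le_lsqrt) (simp_all add: power2_eq_square)
    then have "sqrt (2 * x) \<le> 3 / 2 * sqrt x" using \<open>1 \<le> sqrt x\<close> by (simp add: real_sqrt_mult)
    moreover have "real D \<le> sqrt (2 * x)" by (simp add: D_def x_def)
    ultimately show ?thesis by linarith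
  qed
  have "real L - 1 < real R * (real Mv + 1)"
    using of_nat_less_mult_div_add_one[of R "L - 1"] \<open>2 \<le> R\<close> \<open>1 \<le> L\<close> by (simp add: Mv_def of_nat_diff)
  moreover have "8 * sqrt x * real R \<le> sqrt x * (ln x)\<^sup>2"
    using \<open>real R \<le> y\<close> \<open>1 \<le> sqrt x\<close> by (simp add: y_def)
  ultimately have "real R * (8 * sqrt x - 1) < real R * (real Mv + 1)"
    using L \<open>2 \<le> R\<close> by (simp add: algebra_simps)
  then have Mv: "8 * sqrt x - 2 < real Mv" using \<open>2 \<le> R\<close> by simp
  have "real (partition_count (m - L)) \<le> real D / 2 ^ (R - 1) * real (partition_count m)"
  proof (rule partition_count_diff_le)
    show "1 \<le> R" using \<open>2 \<le> R\<close> by simp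
    have "R * Mv \<le> L - 1" unfolding Mv_def by (simp add: mult.commute div_times_less_eq_dividend)
    then show "R * Mv + 1 \<le> L" using \<open>1 \<le> L\<close> by simp
    show "2 * D \<le> Mv" using D Mv \<open>1 \<le> sqrt x\<close> by linarith
    show "R - 1 \<le> Mv" using \<open>real R \<le> y\<close> y_small Mv by (simp add: y_def)
    show "card (set_mset M) \<le> D" if "M \<in> partitions m" for M
    proof -
      have "real (card (set_mset M)) \<le> sqrt (2 * x)"
        using card_set_mset_partition_le_sqrt[OF that] \<open>m \<le> N\<close>
        by (simp add: x_def) (meson of_nat_le_iff order.trans real_sqrt_le_mono mult_left_mono zero_le_numeral)
      then have "int (card (set_mset M)) \<le> \<lfloor>sqrt (2 * x)\<rfloor>" by (simp add: le_floor_iff)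
      then show ?thesis by (simp add: D_def)
    qed
  qed fact
  also have "\<dots> \<le> 4 * real D * 2 powr (- y) * real (partition_count m)"
    using divide_two_power_floor_le[of "real D" y] \<open>0 \<le> y\<close>
    by (intro mult_right_mono) (simp_all add: R_def)
  also have "\<dots> \<le> 6 * sqrt x * 2 powr (- y) * real (partition_count m)"
    using D by (intro mult_right_mono) auto
  finally show ?thesis by (simp add: y_def)
qed

lemma eventually_Vd_estimate_conditions:
  "\<forall>\<^sub>F x in at_top. 2 \<le> (ln x)\<^sup>2 / 8 \<and> (ln x)\<^sup>2 / 8 + 2 < 8 * sqrt x
     \<and> ((x + 1) ^ 6 + x) * (6 * sqrt x * 2 powr (- ((ln x)\<^sup>2 / 8))) * x powr sqrt (ln x) < (1::real)"
proof -
  have "\<forall>\<^sub>F x in at_top. 2 \<le> (ln x)\<^sup>2 / (8::real)" by real_asymp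
  moreover have "\<forall>\<^sub>F x in at_top. (ln x)\<^sup>2 / 8 + 2 < 8 * sqrt (x::real)" by real_asymp
  moreover have "\<forall>\<^sub>F x in at_top.
      ((x + 1) ^ 6 + x) * (6 * sqrt x * 2 powr (- ((ln x)\<^sup>2 / 8))) * x powr sqrt (ln x) < (1::real)"
    by real_asymp
  ultimately show ?thesis by eventually_elim auto
qed

lemma error_factor_le:
  fixes x n \<rho> :: real
  assumes "1 \<le> x" and "0 \<le> n" and "n + 1 \<le> (x + 1)\<^sup>2" and "0 \<le> \<rho>"
    and "((x + 1) ^ 6 + x) * \<rho> * x powr sqrt (ln x) < 1"
  shows "((n + 1) ^ 3 + x) * \<rho> \<le> x powr - sqrt (ln x)" and "(n + 1) * \<rho> \<le> 1"
proof -
  have "(n + 1) ^ 3 \<le> ((x + 1)\<^sup>2) ^ 3" using assms(2,3) by (intro power_mono) auto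
  then have "((n + 1) ^ 3 + x) * \<rho> \<le> ((x + 1) ^ 6 + x) * \<rho>"
    using assms(4) by (intro mult_right_mono) (simp_all flip: power_mult)
  also have "\<dots> \<le> x powr - sqrt (ln x)"
    using assms(1,5) by (simp add: powr_minus field_simps)
  finally show *: "((n + 1) ^ 3 + x) * \<rho> \<le> x powr - sqrt (ln x)" .
  have "(n + 1) * \<rho> \<le> ((n + 1) ^ 3 + x) * \<rho>"
    using assms(1,2,4) self_le_power[of "n + 1" 3] by (intro mult_right_mono) auto
  also have "\<dots> \<le> x powr - sqrt (ln x)" by (rule *)
  also have "\<dots> \<le> x powr 0"
    using assms(1) by (intro powr_mono) auto
  finally show "(n + 1) * \<rho> \<le> 1" using assms(1) by simp
qed

lemma Vd_estimate:
  obtains N0 :: nat where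
    "\<And>N L. N0 \<le> N \<Longrightarrow> sqrt (real N) * (ln (real N))\<^sup>2 < real L \<Longrightarrow> L \<le> N \<Longrightarrow>
      \<bar>real (Vd (int L) (N + tri L)) - real (partition_count N)\<bar>
        \<le> real (partition_count N) * real N powr - sqrt (ln (real N))"
proof -
  obtain N0 where N0: "\<And>N. N0 \<le> N \<Longrightarrow> 2 \<le> (ln (real N))\<^sup>2 / 8 \<and> (ln (real N))\<^sup>2 / 8 + 2 < 8 * sqrt (real N)
      \<and> ((real N + 1) ^ 6 + real N) * (6 * sqrt (real N) * 2 powr (- ((ln (real N))\<^sup>2 / 8)))
          * real N powr sqrt (ln (real N)) < 1"
    using eventually_compose_filterlim[OF eventually_Vd_estimate_conditions filterlim_real_sequentially]
    by (auto simp: eventually_sequentially)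
  show thesis
  proof (rule that)
    fix N L assume "N0 \<le> N" and L: "sqrt (real N) * (ln (real N))\<^sup>2 < real L" and "L \<le> N"
    define x \<rho> n where "x = real N" and "\<rho> = 6 * sqrt x * 2 powr (- ((ln x)\<^sup>2 / 8))"
      and "n = N + tri L"
    note conds = N0[OF \<open>N0 \<le> N\<close>, folded x_def \<rho>_def]
    then have "N \<noteq> 0" by (cases N) (auto simp: x_def)
    then have "1 \<le> x" by (simp add: x_def)
    have step: "real (partition_count (m - L)) \<le> \<rho> * real (partition_count m)"
      if "L \<le> m" "m \<le> N" for m
      using partition_count_diff_le_explicit[of N L m] conds L that by (simp add: x_def \<rho>_def)
    have "n \<le> N + N * N" using tri_le_square[of L] mult_le_mono[OF \<open>L \<le> N\<close> \<open>L \<le> N\<close>] by (simp add: n_def)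
    then have n: "real n + 1 \<le> (x + 1)\<^sup>2"
      by (simp add: x_def power2_eq_square algebra_simps flip: of_nat_mult)
    have "0 \<le> \<rho>" by (simp add: \<rho>_def x_def)
    moreover have "((x + 1) ^ 6 + x) * \<rho> * x powr sqrt (ln x) < 1" using conds by (simp add: \<rho>_def)
    ultimately have err: "((real n + 1) ^ 3 + x) * \<rho> \<le> x powr - sqrt (ln x)"
      and small: "(real n + 1) * \<rho> \<le> 1"
      using error_factor_le[OF \<open>1 \<le> x\<close> of_nat_0_le_iff n] by auto
    have "real (Vd (int L) n) \<le> real (partition_count N) + (real n + 1) ^ 3 * \<rho> * real (partition_count N)"
      using Vd_le_partition_count_add[of L N \<rho>] step \<open>0 \<le> \<rho>\<close> small by (simp add: n_def)
    moreover have "real (partition_count N) \<le> real (Vd (int L) n) + x * \<rho> * real (partition_count N)"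
      using partition_count_le_Vd_add[OF \<open>L \<le> N\<close>] step by (simp add: n_def x_def)
    moreover have "0 \<le> (real n + 1) ^ 3 * \<rho> * real (partition_count N)" "0 \<le> x * \<rho> * real (partition_count N)"
      using \<open>0 \<le> \<rho>\<close> by (simp_all add: x_def)
    ultimately have "\<bar>real (Vd (int L) n) - real (partition_count N)\<bar>
        \<le> (real n + 1) ^ 3 * \<rho> * real (partition_count N) + x * \<rho> * real (partition_count N)"
      unfolding abs_le_iff by (intro conjI) linarith+
    also have "\<dots> = ((real n + 1) ^ 3 + x) * \<rho> * real (partition_count N)"
      by (simp add: algebra_simps)
    also have "\<dots> \<le> real (partition_count N) * x powr - sqrt (ln x)"
      using err by (simp add: mult.commute mult_left_mono)
    finally show "\<bar>real (Vd (int L) (N + tri L)) - real (partition_count N)\<bar>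
        \<le> real (partition_count N) * real N powr - sqrt (ln (real N))"
      by (simp add: n_def x_def)
  qed
qed

lemma sc_with_rank_rev:
  assumes "sc_with_rank xs m"
  shows "sc_with_rank (rev xs) (- m)"
proof -
  from assms obtain k where k: "k < length xs" and dec: "sorted_wrt (>) (take (Suc k) xs)"
    and inc: "sorted_wrt (<) (drop k xs)" and m: "m = int (length xs) - 2 * int k - 1"
    unfolding sc_with_rank_def by blast
  define k' where "k' = length xs - 1 - k"
  have "take (Suc k') (rev xs) = rev (drop k xs)" using k by (simp add: rev_drop k'_def Suc_diff_Suc)
  then have "sorted_wrt (>) (take (Suc k') (rev xs))" using inc by (simp add: sorted_wrt_rev)
  moreover have "drop k' (rev xs) = rev (take (Suc k) xs)" using k by (simp add: rev_take k'_def)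
  then have "sorted_wrt (<) (drop k' (rev xs))" using dec by (simp add: sorted_wrt_rev)
  moreover have "- m = int (length (rev xs)) - 2 * int k' - 1"
    using k m by (simp add: k'_def of_nat_diff)
  moreover have "k' < length (rev xs)" using k by (simp add: k'_def)
  ultimately show ?thesis unfolding sc_with_rank_def by blast
qed

lemma Vd_uminus: "Vd (- m) n = Vd m n"
proof -
  have "{xs. sum_list xs = n \<and> sc_with_rank xs (- m)} = rev ` {xs. sum_list xs = n \<and> sc_with_rank xs m}"
  proof
    show "{xs. sum_list xs = n \<and> sc_with_rank xs (- m)} \<subseteq> rev ` {xs. sum_list xs = n \<and> sc_with_rank xs m}"
    proof
      fix xs assume "xs \<in> {xs. sum_list xs = n \<and> sc_with_rank xs (- m)}"
      then have "rev xs \<in> {xs. sum_list xs = n \<and> sc_with_rank xs m}"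
        using sc_with_rank_rev[of xs "- m"] by (simp add: sum_list_rev)
      then show "xs \<in> rev ` {xs. sum_list xs = n \<and> sc_with_rank xs m}"
        by (rule image_eqI[rotated]) simp
    qed
  qed (use sc_with_rank_rev in \<open>auto simp: sum_list_rev\<close>)
  then show ?thesis by (simp add: Vd_def card_image)
qed

lemma Vd_abs_rank:
  "Vd l (N + nat (\<bar>l\<bar> * (\<bar>l\<bar> + 1) div 2)) = Vd (int (nat \<bar>l\<bar>)) (N + tri (nat \<bar>l\<bar>))"
proof -
  have "nat (\<bar>l\<bar> * (\<bar>l\<bar> + 1) div 2) = tri (nat \<bar>l\<bar>)"
    by (simp add: tri_eq nat_div_distrib nat_mult_distrib nat_add_distrib)
  moreover have "Vd l n = Vd (int (nat \<bar>l\<bar>)) n" for n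
    using Vd_uminus[of l n] by (cases "0 \<le> l") simp_all
  ultimately show ?thesis by simp
qed

theorem mainTheorem6:
  shows "\<exists>C::real. \<exists>N0::nat. \<forall>N::nat. \<forall>l::int.
    N \<ge> N0 \<and> sqrt (real N) * (ln (real N))^2 < real_of_int \<bar>l\<bar> \<and> real_of_int \<bar>l\<bar> \<le> real N / 2 \<longrightarrow>
    \<bar>real (Vd l (N + nat (\<bar>l\<bar> * (\<bar>l\<bar> + 1) div 2))) - real (partition_count N)\<bar>
      \<le> C * real (partition_count N) * real N powr (- sqrt (ln (real N)))"
proof -
  obtain N0 where N0: "\<And>N L. N0 \<le> N \<Longrightarrow> sqrt (real N) * (ln (real N))\<^sup>2 < real L \<Longrightarrow> L \<le> N \<Longrightarrow>
      \<bar>real (Vd (int L) (N + tri L)) - real (partition_count N)\<bar>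
        \<le> real (partition_count N) * real N powr - sqrt (ln (real N))"
    using Vd_estimate by blast
  show ?thesis
  proof (intro exI allI impI)
    fix N l
    assume a: "N0 \<le> N \<and> sqrt (real N) * (ln (real N))^2 < real_of_int \<bar>l\<bar> \<and> real_of_int \<bar>l\<bar> \<le> real N / 2"
    then have "nat \<bar>l\<bar> \<le> N" by linarith
    with a show "\<bar>real (Vd l (N + nat (\<bar>l\<bar> * (\<bar>l\<bar> + 1) div 2))) - real (partition_count N)\<bar>
      \<le> 1 * real (partition_count N) * real N powr (- sqrt (ln (real N)))"
      using N0[of N "nat \<bar>l\<bar>"] by (simp add: Vd_abs_rank)
  qed
qed

end
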